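(* The normalized geometric discord $\mathcal{D}$ does not attain a maximum on the set of two-qubit states of rank $2$; that is, there is no rank-$2$ two-qubit state $\rho_0$ with $\mathcal{D}(\rho_0)\ge\mathcal{D}(\rho)$ for all rank-$2$ two-qubit states $\rho$.
   Context: A two-qubit state is a density matrix (positive semidefinite, trace one) on $\mathbb{C}^2\otimes\mathbb{C}^2$, and its rank is its rank as a matrix. The set $\Omega_0$ of classical-quantum states consists of states $\sum_k p_k|\psi_k\rangle\langle\psi_k|\otimes\rho_k^B$ with $\{|\psi_k\rangle\}$ an orthonormal basis of the first qubit, $p_k\ge0$ summing to one, and $\rho_k^B$ states of the second qubit. The normalized geometric discord is $\mathcal{D}(\rho)=2\min_{\chi\in\Omega_0}\operatorname{Tr}\big((\rho-\chi)^\dagger(\rho-\chi)\big)$; its maximum over all two-qubit states is $1$. *)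

theory Defs
  imports "HOL-Analysis.Analysis"
begin

text \<open>Single-qubit space: complex^2; two-qubit space: complex^(2 \<times> 2),
  index (i,j) meaning basis vector e_i (first qubit) tensor e_j (second qubit).
  Matrices: complex^n^n, entry A $ r $ c.\<close>

type_synonym qmat = "complex^2^2"
type_synonym qqmat = "complex^(2\<times>2)^(2\<times>2)"

definition psd :: "complex^'n^'n \<Rightarrow> bool" where
  "psd A \<longleftrightarrow> (\<forall>r c. A $ c $ r = cnj (A $ r $ c)) \<and>
     (\<forall>x :: complex^'n. 0 \<le> Re (\<Sum>r\<in>UNIV. \<Sum>c\<in>UNIV. cnj (x $ r) * A $ r $ c * x $ c))"

definition mtrace :: "complex^'n^'n \<Rightarrow> complex" where
  "mtrace A = (\<Sum>i\<in>UNIV. A $ i $ i)"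

definition is_state :: "complex^'n^'n \<Rightarrow> bool" where
  "is_state A \<longleftrightarrow> psd A \<and> mtrace A = 1"

definition tensor :: "qmat \<Rightarrow> qmat \<Rightarrow> qqmat" where
  "tensor A B = (\<chi> r c. A $ fst r $ fst c * B $ snd r $ snd c)"

definition projector :: "complex^2 \<Rightarrow> qmat" where
  "projector v = (\<chi> r c. v $ r * cnj (v $ c))"

definition orthonormal_basis2 :: "(2 \<Rightarrow> complex^2) \<Rightarrow> bool" where
  "orthonormal_basis2 \<psi> \<longleftrightarrow>
     (\<forall>k l. (\<Sum>i\<in>UNIV. cnj (\<psi> k $ i) * \<psi> l $ i) = (if k = l then 1 else 0))"

definition Omega0 :: "qqmat set" where
  "Omega0 = {(\<Sum>k\<in>UNIV. p k *\<^sub>R tensor (projector (\<psi> k)) (\<rho> k)) |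
              \<psi> p \<rho>. orthonormal_basis2 \<psi> \<and> (\<forall>k. 0 \<le> p k) \<and> (\<Sum>k\<in>UNIV. p k) = 1 \<and>
                 (\<forall>k. is_state (\<rho> k))}"

definition hs_sq :: "qqmat \<Rightarrow> real" where
  "hs_sq A = Re (mtrace (\<chi> r c. \<Sum>k\<in>UNIV. cnj (A $ k $ r) * A $ k $ c))"

definition geom_discord :: "qqmat \<Rightarrow> real" where
  "geom_discord \<rho> = 2 * (INF X\<in>Omega0. hs_sq (\<rho> - X))"

end

theory Submission
  imports Defs
begin

text \<open>A rank-2 state is mixed, so \<open>Tr \<rho>\<^sup>2 < 1\<close>. Dephasing the first qubit in the three
  mutually unbiased Pauli bases gives classical-quantum states whose squared distances to \<open>\<rho>\<close>
  add up to \<open>2 Tr \<rho>\<^sup>2 - Tr \<rho>\<^sub>B\<^sup>2 < 3/2\<close>, so \<open>D(\<rho>) < 1\<close>. On the other hand the rank-2 states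
  \<open>(1 - e) |\<Phi>\<^sup>+\<rangle>\<langle>\<Phi>\<^sup>+| + e |00\<rangle>\<langle>00|\<close> have \<open>D \<ge> (1 - e)\<^sup>2\<close>: a classical-quantum state with
  first-qubit basis \<open>\<psi>\<close> has no coherence between \<open>\<psi>\<^sub>1 \<otimes> \<psi>\<^sub>1\<^sup>*\<close> and \<open>\<psi>\<^sub>2 \<otimes> \<psi>\<^sub>2\<^sup>*\<close>, whereas the
  Bell mixture has coherence at least \<open>(1 - e)/2\<close> there. So the supremum \<open>1\<close> over rank-2 states
  is approached but never attained.\<close>

lemma sum_UNIV_2x2: "sum f (UNIV::(2\<times>2) set) = f (1,1) + f (1,2) + f (2,1) + f (2,2)"
proof -
  have "sum f (UNIV::(2\<times>2) set) = sum f (UNIV \<times> UNIV)" by simp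
  also have "\<dots> = (\<Sum>a\<in>UNIV. \<Sum>b\<in>UNIV. f (a,b))" by (simp add: sum.cartesian_product)
  finally show ?thesis by (simp add: sum_2 add.assoc)
qed

lemma of_real_cmod_sq: "complex_of_real ((cmod z)\<^sup>2) = cnj z * z"
  by (metis complex_norm_square mult.commute)

lemma hs_sq_eq_sum_cmod_sq: "hs_sq A = (\<Sum>r\<in>UNIV. \<Sum>c\<in>UNIV. (cmod (A $ r $ c))\<^sup>2)"
proof -
  have "hs_sq A = Re (\<Sum>c\<in>UNIV. \<Sum>r\<in>UNIV. cnj (A $ r $ c) * A $ r $ c)"
    by (simp add: hs_sq_def mtrace_def)
  also have "\<dots> = (\<Sum>c\<in>UNIV. \<Sum>r\<in>UNIV. (cmod (A $ r $ c))\<^sup>2)"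
    by (simp add: Re_sum of_real_cmod_sq[symmetric] del: of_real_power)
  also have "\<dots> = (\<Sum>r\<in>UNIV. \<Sum>c\<in>UNIV. (cmod (A $ r $ c))\<^sup>2)"
    by (rule sum.swap)
  finally show ?thesis .
qed

lemma hs_sq_nonneg: "0 \<le> hs_sq A"
  by (simp add: hs_sq_eq_sum_cmod_sq sum_nonneg)

definition sesq :: "complex^'n^'n \<Rightarrow> complex^'n \<Rightarrow> complex^'n \<Rightarrow> complex" where
  "sesq A x y = (\<Sum>r\<in>UNIV. \<Sum>c\<in>UNIV. cnj (x$r) * A$r$c * y$c)"

lemma sesq_add_left: "sesq A (x + y) z = sesq A x z + sesq A y z"
  by (simp add: sesq_def distrib_right sum.distrib)

lemma sesq_add_right: "sesq A z (x + y) = sesq A z x + sesq A z y"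
  by (simp add: sesq_def distrib_left sum.distrib)

lemma sesq_scale_left: "sesq A (t *s x) y = cnj t * sesq A x y"
  by (simp add: sesq_def sum_distrib_left mult.assoc)

lemma sesq_scale_right: "sesq A x (t *s y) = t * sesq A x y"
  by (simp add: sesq_def sum_distrib_left algebra_simps)

lemma sesq_diff_matrix: "sesq (M - N) x y = sesq M x y - sesq N x y"
  by (simp add: sesq_def algebra_simps sum_subtractf)

lemma sesq_add_matrix: "sesq (M + N) x y = sesq M x y + sesq N x y"
  by (simp add: sesq_def algebra_simps sum.distrib)

lemma sesq_scaleR_matrix: "sesq (c *\<^sub>R M) x y = complex_of_real c * sesq M x y"
  by (simp only: sesq_def vector_scaleR_component)
     (simp add: sum_distrib_left scaleR_conv_of_real algebra_simps)

lemma sesq_axis_left: "sesq A (axis i 1) y = (\<Sum>c\<in>UNIV. A$i$c * y$c)"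
proof -
  have "sesq A (axis i 1) y = (\<Sum>r\<in>UNIV. cnj (axis i 1 $ r) * (\<Sum>c\<in>UNIV. A$r$c * y$c))"
    by (simp add: sesq_def sum_distrib_left mult.assoc)
  also have "\<dots> = (\<Sum>r\<in>UNIV. if r = i then (\<Sum>c\<in>UNIV. A$r$c * y$c) else 0)"
    by (rule sum.cong) (simp_all add: axis_def)
  finally show ?thesis by (simp add: sum.delta)
qed

lemma sesq_axis_axis: "sesq A (axis i 1) (axis j 1) = A$i$j"
proof -
  have "sesq A (axis i 1) (axis j 1) = (\<Sum>c\<in>UNIV. if c = j then A$i$c else 0)"
    unfolding sesq_axis_left by (rule sum.cong) (auto simp: axis_def)
  then show ?thesis by (simp add: sum.delta')
qed

lemma sesq_hermitian:
  assumes "\<forall>r c. A $ c $ r = cnj (A $ r $ c)"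
  shows "sesq A y x = cnj (sesq A x y)"
proof -
  have A: "cnj (A$r$c) = A$c$r" for r c using assms by (metis complex_cnj_cnj)
  have "sesq A y x = (\<Sum>r\<in>UNIV. \<Sum>c\<in>UNIV. cnj (y$c) * A$c$r * x$r)"
    unfolding sesq_def by (rule sum.swap)
  then show ?thesis by (simp add: sesq_def A mult.commute mult.left_commute)
qed

lemma psd_iff_sesq:
  "psd A \<longleftrightarrow> (\<forall>r c. A $ c $ r = cnj (A $ r $ c)) \<and> (\<forall>x. 0 \<le> Re (sesq A x x))"
  unfolding psd_def sesq_def ..

lemma psd_hermitian: "psd A \<Longrightarrow> \<forall>r c. A $ c $ r = cnj (A $ r $ c)"
  unfolding psd_iff_sesq by blast

lemma psd_sesq_nonneg: "psd A \<Longrightarrow> 0 \<le> Re (sesq A x x)"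
  unfolding psd_iff_sesq by blast

lemma psd_sesq_real: "psd A \<Longrightarrow> sesq A x x = complex_of_real (Re (sesq A x x))"
  using sesq_hermitian[OF psd_hermitian, of A x x] by (simp add: complex_eq_iff)

lemma psd_diag: "psd A \<Longrightarrow> A$i$i = complex_of_real (Re (A$i$i)) \<and> 0 \<le> Re (A$i$i)"
  using psd_sesq_real[of A "axis i 1"] psd_sesq_nonneg[of A "axis i 1"]
  by (simp add: sesq_axis_axis)

lemma state_diag_sum: "is_state A \<Longrightarrow> (\<Sum>i\<in>UNIV. Re (A$i$i)) = 1"
  unfolding is_state_def mtrace_def by (metis one_complex.sel(1) Re_sum)

lemma cmod_sq_le_if_quadratic_nonneg:
  fixes P Q :: real and z :: complex
  assumes "\<And>t. 0 \<le> P + 2 * Re (t * z) + (cmod t)\<^sup>2 * Q" and "0 \<le> Q"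
  shows "(cmod z)\<^sup>2 \<le> P * Q"
proof (cases "Q > 0")
  case True
  have "0 \<le> P + 2 * Re ((- cnj z / Q) * z) + (cmod (- cnj z / Q))\<^sup>2 * Q" by (rule assms)
  also have "Re ((- cnj z / Q) * z) = - (cmod z)\<^sup>2 / Q"
    by (simp add: of_real_cmod_sq[symmetric] del: of_real_power)
  also have "(cmod (- cnj z / Q))\<^sup>2 * Q = (cmod z)\<^sup>2 / Q"
    using True by (simp add: norm_divide power_divide power2_eq_square)
  finally have "0 \<le> P - (cmod z)\<^sup>2 / Q" by simp
  then show ?thesis using True by (simp add: field_simps)
next
  case False
  then have Q: "Q = 0" using assms(2) by simp
  show ?thesis
  proof (rule ccontr)
    assume "\<not> ?thesis"
    then have "z \<noteq> 0" using Q by simp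
    define s where "s = (\<bar>P\<bar> + 1) / (cmod z)\<^sup>2"
    have "0 \<le> P + 2 * Re ((- s * cnj z) * z)" using assms(1)[of "- s * cnj z"] Q by simp
    also have "Re ((- s * cnj z) * z) = - (s * (cmod z)\<^sup>2)"
      by (simp add: mult.assoc of_real_cmod_sq[symmetric] del: of_real_power)
    also have "s * (cmod z)\<^sup>2 = \<bar>P\<bar> + 1" using \<open>z \<noteq> 0\<close> by (simp add: s_def)
    finally show False by simp
  qed
qed

lemma psd_cauchy_schwarz:
  assumes "psd A"
  shows "(cmod (sesq A x y))\<^sup>2 \<le> Re (sesq A x x) * Re (sesq A y y)"
proof (rule cmod_sq_le_if_quadratic_nonneg)
  show "0 \<le> Re (sesq A y y)" using assms by (rule psd_sesq_nonneg)
  fix t :: complex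
  have "0 \<le> Re (sesq A (x + t *s y) (x + t *s y))" using assms by (rule psd_sesq_nonneg)
  also have "sesq A (x + t *s y) (x + t *s y) =
      sesq A x x + (t * sesq A x y + cnj (t * sesq A x y)) + (cnj t * t) * sesq A y y"
    by (simp add: sesq_add_left sesq_add_right sesq_scale_left sesq_scale_right
        sesq_hermitian[OF psd_hermitian[OF assms], of x y] algebra_simps)
  also have "t * sesq A x y + cnj (t * sesq A x y) = complex_of_real (2 * Re (t * sesq A x y))"
    by (rule complex_add_cnj)
  finally show "0 \<le> Re (sesq A x x) + 2 * Re (t * sesq A x y) + (cmod t)\<^sup>2 * Re (sesq A y y)"
    by (simp add: of_real_cmod_sq[symmetric] del: of_real_power)
qed

lemma psd_entry_bound: "psd A \<Longrightarrow> (cmod (A$i$j))\<^sup>2 \<le> Re (A$i$i) * Re (A$j$j)"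
  using psd_cauchy_schwarz[of A "axis i 1" "axis j 1"] by (simp add: sesq_axis_axis)

lemma psd_trace_zero:
  assumes "psd A" "Re (mtrace A) = 0"
  shows "A = 0"
proof -
  have "(\<Sum>i\<in>UNIV. Re (A$i$i)) = 0" using assms(2) by (simp add: mtrace_def Re_sum)
  then have "Re (A$i$i) = 0" for i
    using psd_diag[OF assms(1)] by (simp add: sum_nonneg_eq_0_iff)
  then have "(cmod (A$i$j))\<^sup>2 \<le> 0" for i j using psd_entry_bound[OF assms(1), of i j] by simp
  then show ?thesis by (simp add: vec_eq_iff)
qed

lemma psd_scaleR:
  assumes "psd A" "0 \<le> c"
  shows "psd (c *\<^sub>R A)"
  unfolding psd_iff_sesq
proof (intro conjI allI)
  fix r s
  have "A $ s $ r = cnj (A $ r $ s)" using psd_hermitian[OF assms(1)] by blast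
  then show "(c *\<^sub>R A) $ s $ r = cnj ((c *\<^sub>R A) $ r $ s)"
    by (simp only: vector_scaleR_component) (simp add: scaleR_conv_of_real)
next
  fix x
  show "0 \<le> Re (sesq (c *\<^sub>R A) x x)"
    using psd_sesq_nonneg[OF assms(1), of x] assms(2) by (simp add: sesq_scaleR_matrix)
qed

text \<open>Equality in all the Cauchy--Schwarz bounds for the entries forces every row to be a
  multiple of one row with nonzero diagonal entry.\<close>

lemma state_rank_le_1_if_entries_extremal:
  fixes A :: "complex^'n^'n"
  assumes st: "is_state A" and eq: "\<And>i j. (cmod (A$i$j))\<^sup>2 = Re (A$i$i) * Re (A$j$j)"
  shows "rank A \<le> 1"
proof -
  have psd: "psd A" using st by (simp add: is_state_def)
  define d where "d i = Re (A$i$i)" for i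
  have dA: "A$i$i = complex_of_real (d i)" for i using psd_diag[OF psd] by (simp add: d_def)
  have "(\<Sum>i\<in>UNIV. d i) = 1" using state_diag_sum[OF st] by (simp add: d_def)
  then obtain k where dk: "d k \<noteq> 0" by (metis sum.neutral zero_neq_one)
  have row_multiple: "A$j$i = A$j$k / complex_of_real (d k) * A$k$i" for i j
  proof -
    define w where "w = complex_of_real (d k) *s axis i (1::complex) + (- A$k$i) *s axis k 1"
    have aik: "A$i$k = cnj (A$k$i)" using psd_hermitian[OF psd] by blast
    have "sesq A w w = complex_of_real (d k) * (complex_of_real (d k) * A$i$i - cnj (A$k$i) * A$k$i)"
      unfolding w_def
      by (simp only: sesq_add_left sesq_add_right sesq_scale_left sesq_scale_right sesq_axis_axis)
        (simp add: aik dA algebra_simps)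
    also have "cnj (A$k$i) * A$k$i = complex_of_real (d k * d i)"
      using eq[of k i] by (simp add: of_real_cmod_sq[symmetric] d_def del: of_real_power)
    finally have "sesq A w w = 0" by (simp add: dA)
    then have "(cmod (sesq A (axis j 1) w))\<^sup>2 \<le> 0"
      using psd_cauchy_schwarz[OF psd, of "axis j 1" w] by simp
    then have "complex_of_real (d k) * A$j$i - A$k$i * A$j$k = 0"
      unfolding w_def by (simp only: sesq_add_right sesq_scale_right sesq_axis_axis) (simp add: algebra_simps)
    then show ?thesis using dk by (simp add: field_simps)
  qed
  have "rows A \<subseteq> vec.span {row k A}"
  proof
    fix v assume "v \<in> rows A"
    then obtain j where v: "v = row j A" by (auto simp: rows_def)
    have "row j A $ i = ((A$j$k / complex_of_real (d k)) *s row k A) $ i" for i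
      unfolding row_def using row_multiple[of j i] by simp
    then have "v = (A$j$k / complex_of_real (d k)) *s row k A"
      by (simp add: v vec_eq_iff)
    then show "v \<in> vec.span {row k A}" by (simp add: vec.span_base vec.span_scale)
  qed
  then have "vec.dim (rows A) \<le> card {row k A}" by (rule vec.dim_le_card) simp
  then show ?thesis by (simp add: row_rank_def_gen)
qed

text \<open>Purity: \<open>\<Sum>|A\<^sub>i\<^sub>j|\<^sup>2 \<le> \<Sum>A\<^sub>i\<^sub>i A\<^sub>j\<^sub>j = 1\<close>, with equality only in the rank-one case.\<close>

lemma state_rank_le_1_if_pure:
  fixes A :: "complex^'n^'n"
  assumes st: "is_state A" and pure: "1 \<le> (\<Sum>r\<in>UNIV. \<Sum>c\<in>UNIV. (cmod (A$r$c))\<^sup>2)"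
  shows "rank A \<le> 1"
proof (rule state_rank_le_1_if_entries_extremal[OF st])
  have psd: "psd A" using st by (simp add: is_state_def)
  define g where "g r c = Re (A$r$r) * Re (A$c$c) - (cmod (A$r$c))\<^sup>2" for r c
  have g_nonneg: "0 \<le> g r c" for r c using psd_entry_bound[OF psd] by (simp add: g_def)
  have "(\<Sum>r\<in>UNIV. \<Sum>c\<in>UNIV. Re (A$r$r) * Re (A$c$c)) = 1"
    by (simp add: sum_product[symmetric] state_diag_sum[OF st])
  then have "(\<Sum>r\<in>UNIV. \<Sum>c\<in>UNIV. g r c) \<le> 0"
    using pure by (simp add: g_def sum_subtractf)
  then have "(\<Sum>r\<in>UNIV. \<Sum>c\<in>UNIV. g r c) = 0"
    by (intro order_antisym) (simp_all add: sum_nonneg g_nonneg)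
  then have "g i j = 0" for i j
    by (simp add: sum_nonneg_eq_0_iff sum_nonneg g_nonneg)
  then show "(cmod (A$i$j))\<^sup>2 = Re (A$i$i) * Re (A$j$j)" for i j by (simp add: g_def)
qed

lemma hs_sq_lt_1_if_rank_gt_1: "is_state A \<Longrightarrow> 1 < rank A \<Longrightarrow> hs_sq A < 1"
  using state_rank_le_1_if_pure[of A] by (force simp: hs_sq_eq_sum_cmod_sq)

text \<open>\<open>compress v A\<close> is \<open>(\<langle>v| \<otimes> I) A (|v\<rangle> \<otimes> I)\<close>, and \<open>dephase \<psi> A\<close> is the result
  \<open>\<Sum>\<^sub>k (P\<^sub>k \<otimes> I) A (P\<^sub>k \<otimes> I)\<close> of measuring the first qubit in the basis \<open>\<psi>\<close>.\<close>

definition compress :: "complex^2 \<Rightarrow> qqmat \<Rightarrow> qmat" where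
  "compress v A = (\<chi> r c. \<Sum>a\<in>UNIV. \<Sum>b\<in>UNIV. projector v $ b $ a * A$(a,r)$(b,c))"

definition dephase :: "(2 \<Rightarrow> complex^2) \<Rightarrow> qqmat \<Rightarrow> qqmat" where
  "dephase \<psi> A = (\<Sum>k\<in>UNIV. tensor (projector (\<psi> k)) (compress (\<psi> k) A))"

definition ket0_state :: qmat where
  "ket0_state = (\<chi> r c. if r = 1 \<and> c = 1 then 1 else 0)"

lemma is_state_ket0_state: "is_state ket0_state"
proof -
  have "psd ket0_state"
    unfolding psd_def ket0_state_def
    by (simp add: sum_2 forall_2 of_real_cmod_sq[symmetric] del: of_real_power)
  moreover have "mtrace ket0_state = 1" by (simp add: mtrace_def ket0_state_def sum_2)
  ultimately show ?thesis by (simp add: is_state_def)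
qed

lemma psd_compress:
  assumes "psd A"
  shows "psd (compress v A)"
  unfolding psd_iff_sesq
proof (intro conjI allI)
  have A: "cnj (A$r$c) = A$c$r" for r c using psd_hermitian[OF assms] by (metis complex_cnj_cnj)
  show "compress v A $ c $ r = cnj (compress v A $ r $ c)" for r c
    by (simp add: compress_def projector_def sum_2 A algebra_simps)
next
  fix x :: "complex^2"
  have "sesq (compress v A) x x = sesq A (\<chi> p. v $ fst p * x $ snd p) (\<chi> p. v $ fst p * x $ snd p)"
    by (simp add: sesq_def compress_def projector_def sum_2 sum_UNIV_2x2 algebra_simps)
  then show "0 \<le> Re (sesq (compress v A) x x)" using psd_sesq_nonneg[OF assms] by simp
qed

lemma tensor_scaleR_right: "tensor P (c *\<^sub>R M) = c *\<^sub>R tensor P M"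
  by (simp add: tensor_def vec_eq_iff vector_scaleR_component)

lemma dephase_in_Omega0:
  assumes st: "is_state A" and on: "orthonormal_basis2 \<psi>"
    and tr: "(\<Sum>k\<in>UNIV. Re (mtrace (compress (\<psi> k) A))) = Re (mtrace A)"
  shows "dephase \<psi> A \<in> Omega0"
proof -
  have psd: "psd (compress (\<psi> k) A)" for k using st psd_compress by (simp add: is_state_def)
  define p where "p k = Re (mtrace (compress (\<psi> k) A))" for k
  \<comment> \<open>the conditional state of an outcome of probability zero is arbitrary\<close>
  define \<sigma> where "\<sigma> k = (if p k = 0 then ket0_state else (1 / p k) *\<^sub>R compress (\<psi> k) A)" for k
  have diag: "compress (\<psi> k) A $ i $ i = complex_of_real (Re (compress (\<psi> k) A $ i $ i))"
    "0 \<le> Re (compress (\<psi> k) A $ i $ i)" for k i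
    using psd_diag[OF psd] by blast+
  have p_nonneg: "0 \<le> p k" for k using diag(2) by (simp add: p_def mtrace_def sum_2)
  have trace: "mtrace (compress (\<psi> k) A) = complex_of_real (p k)" for k
    unfolding p_def mtrace_def sum_2 by (subst (1 2) diag(1)) simp
  have p_\<sigma>: "p k *\<^sub>R \<sigma> k = compress (\<psi> k) A" for k
    using psd_trace_zero[OF psd] by (simp add: \<sigma>_def p_def)
  have "is_state (\<sigma> k)" for k
  proof (cases "p k = 0")
    case True then show ?thesis by (simp add: \<sigma>_def is_state_ket0_state)
  next
    case False
    then have "0 < p k" using p_nonneg[of k] by simp
    moreover have "mtrace ((1 / p k) *\<^sub>R compress (\<psi> k) A) = (1 / p k) *\<^sub>R mtrace (compress (\<psi> k) A)"
      by (simp add: mtrace_def scaleR_sum_right vector_scaleR_component)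
    ultimately show ?thesis
      using False psd_scaleR[OF psd] by (simp add: \<sigma>_def is_state_def trace scaleR_conv_of_real)
  qed
  moreover have "dephase \<psi> A = (\<Sum>k\<in>UNIV. p k *\<^sub>R tensor (projector (\<psi> k)) (\<sigma> k))"
    by (simp add: dephase_def tensor_scaleR_right[symmetric] p_\<sigma>)
  moreover have "(\<Sum>k\<in>UNIV. p k) = 1"
    using st tr by (simp add: p_def is_state_def)
  ultimately show ?thesis unfolding Omega0_def using on p_nonneg by blast
qed

lemma geom_discord_le:
  assumes "X \<in> Omega0"
  shows "geom_discord A \<le> 2 * hs_sq (A - X)"
proof -
  have "bdd_below ((\<lambda>X. hs_sq (A - X)) ` Omega0)"
    by (rule bdd_belowI[of _ 0]) (auto simp: hs_sq_nonneg)
  then show ?thesis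
    using cINF_lower[OF _ assms] by (simp add: geom_discord_def)
qed

definition inv_sqrt2 :: complex where
  "inv_sqrt2 = complex_of_real (sqrt (1/2))"

lemma cnj_inv_sqrt2 [simp]: "cnj inv_sqrt2 = inv_sqrt2"
  by (simp add: inv_sqrt2_def)

lemma inv_sqrt2_mult_self [simp]: "inv_sqrt2 * inv_sqrt2 = 1/2" "inv_sqrt2 * (inv_sqrt2 * x) = x / 2"
  by (simp_all add: inv_sqrt2_def mult.assoc[symmetric] of_real_mult[symmetric] del: of_real_mult)

text \<open>The eigenbases of the Pauli matrices \<open>\<sigma>\<^sub>z\<close>, \<open>\<sigma>\<^sub>x\<close>, \<open>\<sigma>\<^sub>y\<close>: three mutually unbiased bases.\<close>

definition basis_z :: "2 \<Rightarrow> complex^2" where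
  "basis_z k = (\<chi> i. if i = k then 1 else 0)"

definition basis_x :: "2 \<Rightarrow> complex^2" where
  "basis_x k = (\<chi> i. if i = 1 then inv_sqrt2 else (if k = 1 then inv_sqrt2 else - inv_sqrt2))"

definition basis_y :: "2 \<Rightarrow> complex^2" where
  "basis_y k = (\<chi> i. if i = 1 then inv_sqrt2 else (if k = 1 then \<i> * inv_sqrt2 else - \<i> * inv_sqrt2))"

lemma orthonormal_basis2_basis_z: "orthonormal_basis2 basis_z"
  unfolding orthonormal_basis2_def basis_z_def by (simp add: sum_2 forall_2)

lemma orthonormal_basis2_basis_x: "orthonormal_basis2 basis_x"
  unfolding orthonormal_basis2_def basis_x_def by (simp add: sum_2 forall_2)

lemma orthonormal_basis2_basis_y: "orthonormal_basis2 basis_y"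
  unfolding orthonormal_basis2_def basis_y_def by (simp add: sum_2 forall_2 algebra_simps)

lemma projector_basis_z: "projector (basis_z k) = (\<chi> r c. if r = k \<and> c = k then 1 else 0)"
  by (simp add: projector_def basis_z_def vec_eq_iff)

lemma projector_basis_x:
  "projector (basis_x 1) = (\<chi> r c. 1/2)"
  "projector (basis_x 2) = (\<chi> r c. if r = c then 1/2 else -1/2)"
  by (simp_all add: projector_def basis_x_def vec_eq_iff forall_2)

lemma projector_basis_y:
  "projector (basis_y 1) = (\<chi> r c. if r = c then 1/2 else (if r = 1 then -\<i>/2 else \<i>/2))"
  "projector (basis_y 2) = (\<chi> r c. if r = c then 1/2 else (if r = 1 then \<i>/2 else -\<i>/2))"
  by (simp_all add: projector_def basis_y_def vec_eq_iff forall_2 algebra_simps)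

lemma trace_compress_basis_z: "(\<Sum>k\<in>UNIV. Re (mtrace (compress (basis_z k) A))) = Re (mtrace A)"
  by (simp add: mtrace_def compress_def projector_basis_z sum_2 sum_UNIV_2x2)

lemma trace_compress_basis_x: "(\<Sum>k\<in>UNIV. Re (mtrace (compress (basis_x k) A))) = Re (mtrace A)"
  by (simp add: mtrace_def compress_def projector_basis_x sum_2 sum_UNIV_2x2)

lemma trace_compress_basis_y: "(\<Sum>k\<in>UNIV. Re (mtrace (compress (basis_y k) A))) = Re (mtrace A)"
  by (simp add: mtrace_def compress_def projector_basis_y sum_2 sum_UNIV_2x2 algebra_simps)

lemma dephase_basis_z:
  "dephase basis_z A $ (1,r) $ (1,c) = A $ (1,r) $ (1,c)"
  "dephase basis_z A $ (1,r) $ (2,c) = 0"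
  "dephase basis_z A $ (2,r) $ (1,c) = 0"
  "dephase basis_z A $ (2,r) $ (2,c) = A $ (2,r) $ (2,c)"
  by (simp_all add: dephase_def tensor_def compress_def projector_basis_z sum_2)

lemma dephase_basis_x:
  "dephase basis_x A $ (1,r) $ (1,c) = (A $ (1,r) $ (1,c) + A $ (2,r) $ (2,c)) / 2"
  "dephase basis_x A $ (1,r) $ (2,c) = (A $ (1,r) $ (2,c) + A $ (2,r) $ (1,c)) / 2"
  "dephase basis_x A $ (2,r) $ (1,c) = (A $ (1,r) $ (2,c) + A $ (2,r) $ (1,c)) / 2"
  "dephase basis_x A $ (2,r) $ (2,c) = (A $ (1,r) $ (1,c) + A $ (2,r) $ (2,c)) / 2"
  by (simp_all add: dephase_def tensor_def compress_def projector_basis_x sum_2 algebra_simps)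

lemma dephase_basis_y:
  "dephase basis_y A $ (1,r) $ (1,c) = (A $ (1,r) $ (1,c) + A $ (2,r) $ (2,c)) / 2"
  "dephase basis_y A $ (1,r) $ (2,c) = (A $ (1,r) $ (2,c) - A $ (2,r) $ (1,c)) / 2"
  "dephase basis_y A $ (2,r) $ (1,c) = (A $ (2,r) $ (1,c) - A $ (1,r) $ (2,c)) / 2"
  "dephase basis_y A $ (2,r) $ (2,c) = (A $ (1,r) $ (1,c) + A $ (2,r) $ (2,c)) / 2"
  by (simp_all add: dephase_def tensor_def compress_def projector_basis_y sum_2 algebra_simps)

definition ptrace_first :: "qqmat \<Rightarrow> qmat" where
  "ptrace_first A = (\<chi> r c. \<Sum>a\<in>UNIV. A $ (a,r) $ (a,c))"

lemma mtrace_ptrace_first: "mtrace (ptrace_first A) = mtrace A"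
  by (simp add: mtrace_def ptrace_first_def sum_UNIV_2x2 sum_2)

text \<open>Entrywise form of \<open>\<Sum>\<^sub>\<psi> \<parallel>A - dephase \<psi> A\<parallel>\<^sup>2 = 2\<parallel>A\<parallel>\<^sup>2 - \<parallel>ptrace_first A\<parallel>\<^sup>2\<close>, for the
  entries \<open>a, b, c, d\<close> of \<open>A\<close> at \<open>((1,r),(1,c))\<close>, \<open>((1,r),(2,c))\<close>, \<open>((2,r),(1,c))\<close>, \<open>((2,r),(2,c))\<close>.\<close>

lemma cmod_sq_dephase_identity:
  fixes a b c d :: complex
  shows "((cmod (a - a))\<^sup>2 + (cmod (b - 0))\<^sup>2 + (cmod (c - 0))\<^sup>2 + (cmod (d - d))\<^sup>2) +
    ((cmod (a - (a + d) / 2))\<^sup>2 + (cmod (b - (b + c) / 2))\<^sup>2 + (cmod (c - (b + c) / 2))\<^sup>2 + (cmod (d - (a + d) / 2))\<^sup>2) +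
    ((cmod (a - (a + d) / 2))\<^sup>2 + (cmod (b - (b - c) / 2))\<^sup>2 + (cmod (c - (c - b) / 2))\<^sup>2 + (cmod (d - (a + d) / 2))\<^sup>2)
    = 2 * ((cmod a)\<^sup>2 + (cmod b)\<^sup>2 + (cmod c)\<^sup>2 + (cmod d)\<^sup>2) - (cmod (a + d))\<^sup>2"
  (is "?l = ?r")
proof -
  have "complex_of_real ?l = complex_of_real ?r"
    by (simp only: of_real_add of_real_diff of_real_mult of_real_numeral of_real_cmod_sq)
       (simp add: field_simps)
  then show ?thesis by (simp only: of_real_eq_iff)
qed

lemma hs_sq_dephase_mub_sum:
  "hs_sq (A - dephase basis_z A) + hs_sq (A - dephase basis_x A) + hs_sq (A - dephase basis_y A) =
   2 * hs_sq A - (\<Sum>r\<in>UNIV. \<Sum>c\<in>UNIV. (cmod (ptrace_first A $ r $ c))\<^sup>2)"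
proof -
  define F where "F M r c = (cmod (M$(1,r)$(1,c)))\<^sup>2 + (cmod (M$(1,r)$(2,c)))\<^sup>2 +
     (cmod (M$(2,r)$(1,c)))\<^sup>2 + (cmod (M$(2,r)$(2,c)))\<^sup>2" for M :: qqmat and r c
  have hs: "hs_sq M = (\<Sum>r\<in>UNIV. \<Sum>c\<in>UNIV. F M r c)" for M
    unfolding hs_sq_eq_sum_cmod_sq F_def by (simp add: sum_UNIV_2x2 sum_2 ac_simps)
  have "F (A - dephase basis_z A) r c + F (A - dephase basis_x A) r c + F (A - dephase basis_y A) r c
      = 2 * F A r c - (cmod (ptrace_first A $ r $ c))\<^sup>2" for r c
    unfolding F_def ptrace_first_def
    by (simp only: vector_minus_component dephase_basis_z dephase_basis_x dephase_basis_y
        vec_lambda_beta sum_2) (rule cmod_sq_dephase_identity)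
  then show ?thesis
    unfolding hs by (simp add: sum.distrib[symmetric] sum_subtractf sum_distrib_left)
qed

lemma sum_cmod_sq_ge_half_if_trace_1:
  fixes B :: qmat
  assumes "mtrace B = 1"
  shows "1/2 \<le> (\<Sum>r\<in>UNIV. \<Sum>c\<in>UNIV. (cmod (B$r$c))\<^sup>2)"
proof -
  have re_sq: "(Re z)\<^sup>2 \<le> (cmod z)\<^sup>2" for z :: complex
    using power_mono[OF abs_Re_le_cmod[of z] abs_ge_zero, of 2] by simp
  have "Re (B$1$1) + Re (B$2$2) = 1"
    using arg_cong[OF assms, of Re] by (simp add: mtrace_def sum_2)
  then have "(Re (B$1$1) + Re (B$2$2))\<^sup>2 = 1" by simp
  then have "1/2 \<le> (Re (B$1$1))\<^sup>2 + (Re (B$2$2))\<^sup>2"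
    using zero_le_power2[of "Re (B$1$1) - Re (B$2$2)"] by (simp add: power2_eq_square algebra_simps)
  then show ?thesis
    unfolding sum_2 using re_sq[of "B$1$1"] re_sq[of "B$2$2"]
      zero_le_power2[of "cmod (B$1$2)"] zero_le_power2[of "cmod (B$2$1)"] by linarith
qed

lemma geom_discord_lt_1:
  assumes st: "is_state A" and rk: "1 < rank A"
  shows "geom_discord A < 1"
proof -
  have "hs_sq (A - dephase basis_z A) + hs_sq (A - dephase basis_x A) + hs_sq (A - dephase basis_y A) < 3/2"
    using hs_sq_dephase_mub_sum[of A] hs_sq_lt_1_if_rank_gt_1[OF st rk]
      sum_cmod_sq_ge_half_if_trace_1[of "ptrace_first A"] st
    by (simp add: mtrace_ptrace_first is_state_def)
  then have "hs_sq (A - dephase basis_z A) < 1/2 \<or> hs_sq (A - dephase basis_x A) < 1/2 \<or>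
      hs_sq (A - dephase basis_y A) < 1/2"
    by linarith
  then obtain \<psi> where "orthonormal_basis2 \<psi>"
      and "(\<Sum>k\<in>UNIV. Re (mtrace (compress (\<psi> k) A))) = Re (mtrace A)"
      and small: "hs_sq (A - dephase \<psi> A) < 1/2"
    using orthonormal_basis2_basis_z orthonormal_basis2_basis_x orthonormal_basis2_basis_y
      trace_compress_basis_z trace_compress_basis_x trace_compress_basis_y
    by blast
  then have "dephase \<psi> A \<in> Omega0" by (intro dephase_in_Omega0 st)
  then have "geom_discord A \<le> 2 * hs_sq (A - dephase \<psi> A)" by (rule geom_discord_le)
  then show ?thesis using small by simp
qed

text \<open>\<open>bell_mix e = (1 - e) |\<Phi>\<^sup>+\<rangle>\<langle>\<Phi>\<^sup>+| + e |00\<rangle>\<langle>00|\<close> with \<open>\<Phi>\<^sup>+ = (|00\<rangle> + |11\<rangle>)/\<surd>2\<close>.\<close>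

definition bell_mix :: "real \<Rightarrow> qqmat" where
  "bell_mix e = (\<chi> r c. complex_of_real ((if fst r = snd r \<and> fst c = snd c then (1-e)/2 else 0) +
                        (if r = (1,1) \<and> c = (1,1) then e else 0)))"

lemma is_state_bell_mix:
  assumes "0 \<le> e" "e \<le> 1"
  shows "is_state (bell_mix e)"
proof -
  have "sesq (bell_mix e) x x = complex_of_real ((1-e)/2 * (cmod (x$(1,1) + x$(2,2)))\<^sup>2 + e * (cmod (x$(1,1)))\<^sup>2)"
    for x :: "complex^(2\<times>2)"
    by (simp only: of_real_add of_real_mult of_real_cmod_sq)
       (simp add: sesq_def bell_mix_def sum_UNIV_2x2 algebra_simps)
  then have "psd (bell_mix e)"
    using assms unfolding psd_iff_sesq by (auto simp: bell_mix_def)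
  moreover have "mtrace (bell_mix e) = 1"
    by (simp add: mtrace_def bell_mix_def sum_UNIV_2x2)
  ultimately show ?thesis by (simp add: is_state_def)
qed

lemma rank_eq_2_if_rows:
  fixes A :: "'a::field^'n^'m"
  assumes "rows A \<subseteq> {v, w, 0}" "v \<in> rows A" "w \<in> rows A" "vec.independent {v, w}" "v \<noteq> w"
  shows "rank A = 2"
proof -
  have "vec.dim (rows A) \<le> vec.dim {v, w}"
    by (rule vec.dim_mono) (use assms(1) in \<open>auto simp: vec.span_base vec.span_zero\<close>)
  moreover have "vec.dim {v, w} \<le> vec.dim (rows A)"
    by (rule vec.dim_mono) (use assms(2,3) in \<open>auto simp: vec.span_base\<close>)
  moreover have "vec.dim {v, w} = 2"
    using vec.dim_eq_card_independent[OF assms(4)] assms(5) by simp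
  ultimately show ?thesis by (simp add: row_rank_def_gen)
qed

lemma UNIV_2x2: "(UNIV::(2\<times>2) set) = {(1,1),(1,2),(2,1),(2,2)}"
  using exhaust_2 by fastforce

lemma rank_bell_mix:
  assumes "0 < e" "e < 1"
  shows "rank (bell_mix e) = 2"
proof (rule rank_eq_2_if_rows)
  define v where "v = row (1,1) (bell_mix e)"
  define w where "w = row (2,2) (bell_mix e)"
  have "row (1,2) (bell_mix e) = 0" "row (2,1) (bell_mix e) = 0"
    by (simp_all add: row_def bell_mix_def vec_eq_iff)
  moreover have "rows (bell_mix e) = (\<lambda>i. row i (bell_mix e)) ` UNIV"
    by (auto simp: rows_def)
  ultimately show "rows (bell_mix e) \<subseteq> {v, w, 0}" "v \<in> rows (bell_mix e)" "w \<in> rows (bell_mix e)"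
    by (auto simp: UNIV_2x2 v_def w_def)
  have entries: "v $ (1,1) = complex_of_real ((1-e)/2 + e)" "v $ (2,2) = complex_of_real ((1-e)/2)"
    "w $ (1,1) = complex_of_real ((1-e)/2)" "w $ (2,2) = complex_of_real ((1-e)/2)"
    by (simp_all add: v_def w_def row_def bell_mix_def)
  have half_ne_0: "complex_of_real ((1-e)/2) \<noteq> 0" using assms by (simp only: of_real_eq_0_iff) simp
  have "v \<notin> vec.span {w}"
  proof
    assume "v \<in> vec.span {w}"
    then obtain k where k: "v = k *s w" by (auto simp: vec.span_singleton)
    have "complex_of_real ((1-e)/2) = k * complex_of_real ((1-e)/2)"
      using arg_cong[OF k, of "\<lambda>v. v $ (2,2)"] by (simp only: entries vector_smult_component)
    then have "k = 1" using half_ne_0 by (metis mult_cancel_right2)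
    then have "complex_of_real ((1-e)/2 + e) = complex_of_real ((1-e)/2)"
      using arg_cong[OF k, of "\<lambda>v. v $ (1,1)"] by (simp only: entries vector_smult_component) simp
    then show False using assms by (simp only: of_real_eq_iff)
  qed
  then show "vec.independent {v, w}"
    by (rule vec.independent_insertI) (use entries half_ne_0 in auto)
  show "v \<noteq> w" using \<open>v \<notin> vec.span {w}\<close> by (auto intro: vec.span_base)
qed

lemma cauchy_schwarz_double_sum:
  fixes E M :: "'i::finite \<Rightarrow> 'j::finite \<Rightarrow> complex"
  shows "(cmod (\<Sum>r\<in>UNIV. \<Sum>c\<in>UNIV. cnj (E r c) * M r c))\<^sup>2 \<le>
         (\<Sum>r\<in>UNIV. \<Sum>c\<in>UNIV. (cmod (E r c))\<^sup>2) * (\<Sum>r\<in>UNIV. \<Sum>c\<in>UNIV. (cmod (M r c))\<^sup>2)"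
proof -
  have pairs: "(\<Sum>r\<in>UNIV. \<Sum>c\<in>UNIV. f r c) = (\<Sum>p\<in>UNIV \<times> UNIV. f (fst p) (snd p))"
    for f :: "'i \<Rightarrow> 'j \<Rightarrow> real"
    by (simp add: sum.cartesian_product case_prod_beta)
  have "cmod (\<Sum>r\<in>UNIV. \<Sum>c\<in>UNIV. cnj (E r c) * M r c) \<le> (\<Sum>r\<in>UNIV. \<Sum>c\<in>UNIV. cmod (E r c) * cmod (M r c))"
    by (rule order_trans[OF norm_sum], rule sum_mono, rule order_trans[OF norm_sum])
       (simp add: norm_mult)
  then have "(cmod (\<Sum>r\<in>UNIV. \<Sum>c\<in>UNIV. cnj (E r c) * M r c))\<^sup>2 \<le>
      (\<Sum>p\<in>UNIV \<times> UNIV. cmod (E (fst p) (snd p)) * cmod (M (fst p) (snd p)))\<^sup>2"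
    by (simp add: pairs power_mono)
  also have "\<dots> \<le> (\<Sum>p\<in>UNIV \<times> UNIV. (cmod (E (fst p) (snd p)))\<^sup>2) * (\<Sum>p\<in>UNIV \<times> UNIV. (cmod (M (fst p) (snd p)))\<^sup>2)"
    by (rule Cauchy_Schwarz_ineq_sum)
  finally show ?thesis by (simp only: pairs)
qed

lemma sum_cmod_sq_sym_outer:
  fixes a b :: "'i::finite \<Rightarrow> complex"
  shows "complex_of_real (\<Sum>r\<in>UNIV. \<Sum>c\<in>UNIV. (cmod (a r * cnj (b c) + b r * cnj (a c)))\<^sup>2) =
     2 * ((\<Sum>r\<in>UNIV. cnj (a r) * a r) * (\<Sum>r\<in>UNIV. cnj (b r) * b r)) +
     (\<Sum>r\<in>UNIV. a r * cnj (b r))\<^sup>2 + (\<Sum>r\<in>UNIV. cnj (a r) * b r)\<^sup>2"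
proof -
  have "complex_of_real (\<Sum>r\<in>UNIV. \<Sum>c\<in>UNIV. (cmod (a r * cnj (b c) + b r * cnj (a c)))\<^sup>2) =
    (\<Sum>r\<in>UNIV. \<Sum>c\<in>UNIV. (cnj (a r) * a r) * (cnj (b c) * b c) + (a r * cnj (b r)) * (a c * cnj (b c))
       + (cnj (a r) * b r) * (cnj (a c) * b c) + (cnj (b r) * b r) * (cnj (a c) * a c))"
    by (simp only: of_real_sum of_real_cmod_sq) (simp add: algebra_simps)
  also have "\<dots> = 2 * ((\<Sum>r\<in>UNIV. cnj (a r) * a r) * (\<Sum>r\<in>UNIV. cnj (b r) * b r)) +
     (\<Sum>r\<in>UNIV. a r * cnj (b r))\<^sup>2 + (\<Sum>r\<in>UNIV. cnj (a r) * b r)\<^sup>2"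
    by (simp only: sum.distrib sum_product[symmetric]) (simp add: power2_eq_square algebra_simps)
  finally show ?thesis .
qed

text \<open>Cauchy--Schwarz against the test operator \<open>|a\<rangle>\<langle>b| + |b\<rangle>\<langle>a|\<close>, whose squared
  Hilbert--Schmidt norm is \<open>2\<close>.\<close>

lemma cmod_sesq_sym_le_hs:
  fixes a b :: "complex^'n" and M :: "complex^'n^'n"
  assumes a: "(\<Sum>r\<in>UNIV. cnj (a$r) * a$r) = 1" and b: "(\<Sum>r\<in>UNIV. cnj (b$r) * b$r) = 1"
    and ab: "(\<Sum>r\<in>UNIV. cnj (a$r) * b$r) = 0"
  shows "(cmod (sesq M a b + sesq M b a))\<^sup>2 \<le> 2 * (\<Sum>r\<in>UNIV. \<Sum>c\<in>UNIV. (cmod (M$r$c))\<^sup>2)"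
proof -
  define E where "E r c = a$r * cnj (b$c) + b$r * cnj (a$c)" for r c
  have "sesq M a b + sesq M b a = (\<Sum>r\<in>UNIV. \<Sum>c\<in>UNIV. cnj (E r c) * M$r$c)"
    unfolding sesq_def E_def by (simp add: algebra_simps sum.distrib)
  moreover have "(\<Sum>r\<in>UNIV. \<Sum>c\<in>UNIV. (cmod (E r c))\<^sup>2) = 2"
  proof -
    have ba: "(\<Sum>r\<in>UNIV. a$r * cnj (b$r)) = 0"
      using arg_cong[OF ab, of cnj] by (simp add: cnj_sum mult.commute)
    have "complex_of_real (\<Sum>r\<in>UNIV. \<Sum>c\<in>UNIV. (cmod (E r c))\<^sup>2) = complex_of_real 2"
      unfolding E_def sum_cmod_sq_sym_outer[of "\<lambda>r. a$r" "\<lambda>r. b$r"] a b ab ba by simp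
    then show ?thesis by (simp only: of_real_eq_iff)
  qed
  ultimately show ?thesis using cauchy_schwarz_double_sum[of E "\<lambda>r c. M$r$c"] by simp
qed

text \<open>\<open>vec_projector u\<close> is \<open>u \<otimes> u\<^sup>*\<close>, the vectorisation of \<open>|u\<rangle>\<langle>u|\<close>.\<close>

definition vec_projector :: "complex^2 \<Rightarrow> complex^(2\<times>2)" where
  "vec_projector u = (\<chi> r. u $ fst r * cnj (u $ snd r))"

lemma inner_vec_projector:
  "(\<Sum>r\<in>UNIV. cnj (vec_projector u $ r) * vec_projector v $ r) =
   (\<Sum>i\<in>UNIV. cnj (u$i) * v$i) * (\<Sum>i\<in>UNIV. cnj (v$i) * u$i)"
  by (simp add: vec_projector_def sum_UNIV_2x2 sum_2 algebra_simps)

lemma sesq_tensor_vec_projector: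
  "sesq (tensor (projector w) M) (vec_projector u) (vec_projector v) =
   (\<Sum>i\<in>UNIV. cnj (u$i) * w$i) * (\<Sum>i\<in>UNIV. cnj (w$i) * v$i) *
   (\<Sum>i\<in>UNIV. \<Sum>j\<in>UNIV. u$i * M$i$j * cnj (v$j))"
  by (simp add: sesq_def tensor_def projector_def vec_projector_def sum_UNIV_2x2 sum_2 algebra_simps)

lemma Omega0_sesq_vec_projector:
  assumes "X \<in> Omega0"
  obtains \<psi> where "orthonormal_basis2 \<psi>"
    "sesq X (vec_projector (\<psi> 1)) (vec_projector (\<psi> 2)) = 0"
    "sesq X (vec_projector (\<psi> 2)) (vec_projector (\<psi> 1)) = 0"
proof -
  obtain \<psi> p \<sigma> where X: "X = (\<Sum>k\<in>UNIV. p k *\<^sub>R tensor (projector (\<psi> k)) (\<sigma> k))"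
      and on: "orthonormal_basis2 \<psi>"
    using assms unfolding Omega0_def by blast
  have ob: "(\<Sum>i\<in>UNIV. cnj (\<psi> k $ i) * \<psi> l $ i) = (if k = l then 1 else 0)" for k l
    using on unfolding orthonormal_basis2_def by blast
  have "(\<Sum>i\<in>UNIV. cnj (\<psi> 1 $ i) * \<psi> 2 $ i) = 0" "(\<Sum>i\<in>UNIV. cnj (\<psi> 2 $ i) * \<psi> 1 $ i) = 0"
    using ob[of 1 2] ob[of 2 1] by simp_all
  then show ?thesis
    using that[OF on] unfolding X
    by (simp add: sum_2 sesq_add_matrix sesq_scaleR_matrix sesq_tensor_vec_projector)
qed

lemma Re_sesq_bell_mix_vec_projector:
  assumes "0 \<le> e" and u: "(\<Sum>i\<in>UNIV. cnj (u$i) * u$i) = 1" and v: "(\<Sum>i\<in>UNIV. cnj (v$i) * v$i) = 1"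
  shows "(1-e)/2 \<le> Re (sesq (bell_mix e) (vec_projector u) (vec_projector v))"
proof -
  have "sesq (bell_mix e) (vec_projector u) (vec_projector v) =
      complex_of_real ((1-e)/2) * ((\<Sum>i\<in>UNIV. cnj (u$i) * u$i) * (\<Sum>i\<in>UNIV. cnj (v$i) * v$i))
      + complex_of_real e * ((cnj (u$1) * u$1) * (cnj (v$1) * v$1))"
    by (simp add: sesq_def bell_mix_def vec_projector_def sum_UNIV_2x2 sum_2 algebra_simps)
  also have "\<dots> = complex_of_real ((1-e)/2 + e * ((cmod (u$1))\<^sup>2 * (cmod (v$1))\<^sup>2))"
    unfolding u v by (simp only: of_real_add of_real_mult of_real_cmod_sq) simp
  finally show ?thesis using assms(1) by simp
qed

lemma hs_sq_bell_mix_minus_Omega0: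
  assumes e: "0 \<le> e" "e \<le> 1" and X: "X \<in> Omega0"
  shows "(1-e)\<^sup>2 / 2 \<le> hs_sq (bell_mix e - X)"
proof -
  obtain \<psi> where on: "orthonormal_basis2 \<psi>"
    and X12: "sesq X (vec_projector (\<psi> 1)) (vec_projector (\<psi> 2)) = 0"
    and X21: "sesq X (vec_projector (\<psi> 2)) (vec_projector (\<psi> 1)) = 0"
    using Omega0_sesq_vec_projector[OF X] .
  have ob: "(\<Sum>i\<in>UNIV. cnj (\<psi> k $ i) * \<psi> l $ i) = (if k = l then 1 else 0)" for k l
    using on unfolding orthonormal_basis2_def by blast
  have unit: "(\<Sum>i\<in>UNIV. cnj (\<psi> k $ i) * \<psi> k $ i) = 1" for k using ob[of k k] by simp
  define a where "a = vec_projector (\<psi> 1)"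
  define b where "b = vec_projector (\<psi> 2)"
  define S where "S = sesq (bell_mix e - X) a b + sesq (bell_mix e - X) b a"
  have "1 - e \<le> Re S"
    using Re_sesq_bell_mix_vec_projector[OF e(1) unit[of 1] unit[of 2]]
      Re_sesq_bell_mix_vec_projector[OF e(1) unit[of 2] unit[of 1]]
    by (simp add: S_def sesq_diff_matrix a_def b_def X12 X21)
  then have "(1-e)\<^sup>2 \<le> (cmod S)\<^sup>2"
    using e complex_Re_le_cmod[of S] by (simp add: power_mono)
  also have "\<dots> \<le> 2 * hs_sq (bell_mix e - X)"
    unfolding S_def hs_sq_eq_sum_cmod_sq
    by (rule cmod_sesq_sym_le_hs) (simp_all add: a_def b_def inner_vec_projector ob unit)
  finally show ?thesis by simp
qed

lemma geom_discord_bell_mix_ge: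
  assumes "0 \<le> e" "e \<le> 1"
  shows "(1-e)\<^sup>2 \<le> geom_discord (bell_mix e)"
proof -
  have "dephase basis_z (bell_mix e) \<in> Omega0"
    using is_state_bell_mix[OF assms] orthonormal_basis2_basis_z trace_compress_basis_z
    by (rule dephase_in_Omega0)
  then have "(1-e)\<^sup>2 / 2 \<le> (INF X\<in>Omega0. hs_sq (bell_mix e - X))"
    by (intro cINF_greatest hs_sq_bell_mix_minus_Omega0[OF assms]) blast+
  then show ?thesis by (simp add: geom_discord_def)
qed

lemma exists_rank_2_geom_discord_gt:
  assumes "d < 1"
  shows "\<exists>\<rho>. is_state \<rho> \<and> rank \<rho> = 2 \<and> d < geom_discord \<rho>"
proof -
  define e where "e = (1 - max d 0) / 4"
  have e: "0 < e" "e < 1" using assms by (auto simp: e_def)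
  have "d < 1 - 2 * e" using assms by (auto simp: e_def field_simps split: split_max)
  also have "\<dots> \<le> (1 - e)\<^sup>2" by (simp add: power2_eq_square algebra_simps)
  also have "\<dots> \<le> geom_discord (bell_mix e)" using e by (intro geom_discord_bell_mix_ge) simp_all
  finally have "d < geom_discord (bell_mix e)" .
  moreover have "is_state (bell_mix e)" "rank (bell_mix e) = 2"
    using e by (simp_all add: is_state_bell_mix rank_bell_mix)
  ultimately show ?thesis by blast
qed

theorem proposition3:
  shows "\<not> (\<exists>\<rho>0 :: qqmat. is_state \<rho>0 \<and> rank \<rho>0 = 2 \<and>
            (\<forall>\<rho> :: qqmat. is_state \<rho> \<and> rank \<rho> = 2 \<longrightarrow> geom_discord \<rho> \<le> geom_discord \<rho>0))"
proof
  assume "\<exists>\<rho>0 :: qqmat. is_state \<rho>0 \<and> rank \<rho>0 = 2 \<and>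
            (\<forall>\<rho> :: qqmat. is_state \<rho> \<and> rank \<rho> = 2 \<longrightarrow> geom_discord \<rho> \<le> geom_discord \<rho>0)"
  then obtain \<rho>0 :: qqmat where st: "is_state \<rho>0" and rk: "rank \<rho>0 = 2"
    and max: "\<And>\<rho>. is_state \<rho> \<Longrightarrow> rank \<rho> = 2 \<Longrightarrow> geom_discord \<rho> \<le> geom_discord \<rho>0"
    by blast
  have "geom_discord \<rho>0 < 1" using geom_discord_lt_1[OF st] rk by simp
  then obtain \<rho> where "is_state \<rho>" "rank \<rho> = 2" "geom_discord \<rho>0 < geom_discord \<rho>"
    using exists_rank_2_geom_discord_gt by blast
  then show False using max by force
qed

end
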